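(* Let $k$ be a field of characteristic two and let $\tau$ be a triangular involution of $k[x,y,z,w]$. Then there exists a $k$-algebra automorphism $\varphi$ of $k[x,y,z,w]$ such that $(\varphi^{-1}\circ\tau\circ\varphi)(x)=x$, $(\varphi^{-1}\circ\tau\circ\varphi)(y)=y+\phi_2'$, $(\varphi^{-1}\circ\tau\circ\varphi)(z)=z+\phi_3'$, $(\varphi^{-1}\circ\tau\circ\varphi)(w)=w+\phi_4'$, where $\phi_2'\in k[x]$, $\phi_3'\in k[x,y]$, $\phi_4'\in k[x,y,z]$, and $\phi_2',\phi_3'$ satisfy one of the following: (1) $\phi_2'=\phi_3'=0$; (2) $\phi_2'=0$ and $\phi_3'\neq 0$; (3) $\phi_2'\neq0$ and $\phi_3'\neq0$.
   Context: A $k$-algebra automorphism $\sigma$ of $k[x,y,z,w]$ is triangular if $\sigma(x)=\lambda_1x+\phi_1$, $\sigma(y)=\lambda_2y+\phi_2$, $\sigma(z)=\lambda_3z+\phi_3$, $\sigma(w)=\lambda_4w+\phi_4$ with $\lambda_i\in k\setminus\{0\}$, $\phi_1\in k$, $\phi_2\in k[x]$, $\phi_3\in k[x,y]$, $\phi_4\in k[x,y,z]$. An involution is an automorphism $\sigma$ with $\sigma^2=\mathrm{id}$. *)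

theory Defs
  imports "HOL-Computational_Algebra.Polynomial"
begin

text \<open>The polynomial ring k[x,y,z,w] is represented as the iterated polynomial
ring ((k[x])[y])[z])[w], i.e. the type 'a poly poly poly poly.\<close>

type_synonym 'a mpoly4 = "'a poly poly poly poly"

definition constk :: "'a::field \<Rightarrow> 'a mpoly4" where
  "constk c = [:[:[:[:c:]:]:]:]"

definition emb_x :: "'a::field poly \<Rightarrow> 'a mpoly4" where
  "emb_x p = [:[:[:p:]:]:]"
definition emb_xy :: "'a::field poly poly \<Rightarrow> 'a mpoly4" where
  "emb_xy p = [:[:p:]:]"
definition emb_xyz :: "'a::field poly poly poly \<Rightarrow> 'a mpoly4" where
  "emb_xyz p = [:p:]"

definition varX :: "'a::field mpoly4" where "varX = emb_x [:0, 1:]"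
definition varY :: "'a::field mpoly4" where "varY = emb_xy [:0, 1:]"
definition varZ :: "'a::field mpoly4" where "varZ = emb_xyz [:0, 1:]"
definition varW :: "'a::field mpoly4" where "varW = [:0, 1:]"

definition k_alg_hom :: "('a::field mpoly4 \<Rightarrow> 'a mpoly4) \<Rightarrow> bool" where
  "k_alg_hom f \<longleftrightarrow>
     (\<forall>p q. f (p + q) = f p + f q) \<and>
     (\<forall>p q. f (p * q) = f p * f q) \<and>
     f 1 = 1 \<and>
     (\<forall>c. f (constk c) = constk c)"

definition k_alg_aut :: "('a::field mpoly4 \<Rightarrow> 'a mpoly4) \<Rightarrow> bool" where
  "k_alg_aut f \<longleftrightarrow> k_alg_hom f \<and> bij f"

definition triangular :: "('a::field mpoly4 \<Rightarrow> 'a mpoly4) \<Rightarrow> bool" where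
  "triangular s \<longleftrightarrow> k_alg_aut s \<and>
     (\<exists>l1 l2 l3 l4 (c1::'a) p2 p3 p4.
        l1 \<noteq> 0 \<and> l2 \<noteq> 0 \<and> l3 \<noteq> 0 \<and> l4 \<noteq> 0 \<and>
        s varX = constk l1 * varX + constk c1 \<and>
        s varY = constk l2 * varY + emb_x p2 \<and>
        s varZ = constk l3 * varZ + emb_xy p3 \<and>
        s varW = constk l4 * varW + emb_xyz p4)"

definition involution :: "('a::field mpoly4 \<Rightarrow> 'a mpoly4) \<Rightarrow> bool" where
  "involution s \<longleftrightarrow> k_alg_aut s \<and> s \<circ> s = id"

end

theory Submission
  imports Defs
begin

text \<open>In characteristic two a scaling factor \<open>\<lambda>\<close> with \<open>\<lambda>\<^sup>2 = 1\<close> is \<open>1\<close>, so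
  \<open>\<tau>\<^sup>2 = id\<close> forces \<open>\<tau> x = x + c\<close>, \<open>\<tau> y = y + \<phi>\<^sub>2\<close>, \<open>\<tau> z = z + \<phi>\<^sub>3\<close>, \<open>\<tau> w = w + \<phi>\<^sub>4\<close>,
  and then also \<open>\<tau> \<phi>\<^sub>i = \<phi>\<^sub>i\<close>. If \<open>c \<noteq> 0\<close>, the element \<open>t = x/c\<close> satisfies \<open>\<tau> t = t + 1\<close>,
  so \<open>y + \<phi>\<^sub>2 t\<close>, \<open>z + \<phi>\<^sub>3 t\<close>, \<open>w + \<phi>\<^sub>4 t\<close> are \<open>\<tau>\<close>-invariant; the automorphism sending
  \<open>x, y, z, w\<close> to these three invariants and \<open>x\<close> conjugates \<open>\<tau>\<close> to \<open>w \<mapsto> w + c\<close>.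
  If \<open>c = 0\<close>, only the case \<open>\<phi>\<^sub>2 \<noteq> 0 = \<phi>\<^sub>3\<close> needs work, and swapping \<open>y\<close> and \<open>z\<close>
  handles it.\<close>

definition ring_hom :: "('a::comm_ring_1 \<Rightarrow> 'b::comm_ring_1) \<Rightarrow> bool" where
  "ring_hom f \<longleftrightarrow> (\<forall>p q. f (p + q) = f p + f q) \<and> (\<forall>p q. f (p * q) = f p * f q) \<and> f 1 = 1"

lemma ring_hom_0: "ring_hom f \<Longrightarrow> f 0 = 0"
  unfolding ring_hom_def by (metis add_cancel_right_right add_0)

lemma ring_hom_comp: "ring_hom f \<Longrightarrow> ring_hom g \<Longrightarrow> ring_hom (f \<circ> g)"
  by (simp add: ring_hom_def)

lemma ring_hom_poly: "ring_hom (\<lambda>p. poly p x)"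
  by (simp add: ring_hom_def)

lemma ring_hom_map_poly:
  assumes h: "ring_hom h"
  shows "ring_hom (map_poly h)"
proof -
  have h0: "h 0 = 0" and hadd: "\<And>a b. h (a + b) = h a + h b" and hmult: "\<And>a b. h (a * b) = h a * h b"
    using h ring_hom_0[OF h] by (auto simp: ring_hom_def)
  have add: "map_poly h (p + q) = map_poly h p + map_poly h q" for p q
    by (intro poly_eqI) (simp add: coeff_map_poly h0 hadd)
  have "map_poly h (p * q) = map_poly h p * map_poly h q" for p q
  proof (induction p)
    case (pCons a p)
    have "map_poly h (pCons a p * q) = smult (h a) (map_poly h q) + pCons 0 (map_poly h (p * q))"
      by (simp add: add map_poly_pCons map_poly_smult h0 hmult)
    also have "\<dots> = map_poly h (pCons a p) * map_poly h q"
      by (simp add: pCons.IH map_poly_pCons h0)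
    finally show ?case .
  qed simp
  with add h show ?thesis
    by (simp add: ring_hom_def)
qed

lemma ring_hom_poly_map_poly: "ring_hom h \<Longrightarrow> ring_hom (\<lambda>p. poly (map_poly h p) x)"
  using ring_hom_comp[OF ring_hom_poly ring_hom_map_poly] by (simp add: comp_def)

lemma poly_map_poly_const: "ring_hom h \<Longrightarrow> poly (map_poly h [:c:]) x = h c"
  by (simp add: map_poly_pCons ring_hom_0)

lemma poly_map_poly_X: "ring_hom h \<Longrightarrow> poly (map_poly h [:0, 1:]) x = x"
  by (simp add: map_poly_pCons ring_hom_0) (simp add: ring_hom_def)

lemma ring_hom_pCons:
  assumes "ring_hom f"
  shows "f (pCons a p) = f [:a:] + f [:0, 1:] * f p"
proof -
  have "f (pCons a p) = f ([:a:] + [:0, 1:] * p)"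
    by simp
  also have "\<dots> = f [:a:] + f [:0, 1:] * f p"
    using assms unfolding ring_hom_def by (simp only:)
  finally show ?thesis .
qed

lemma poly_ring_hom_eqI:
  fixes f g :: "'a::comm_ring_1 poly \<Rightarrow> 'b::comm_ring_1"
  assumes "ring_hom f" "ring_hom g" "\<And>c. f [:c:] = g [:c:]" "f [:0, 1:] = g [:0, 1:]"
  shows "f = g"
proof
  fix p show "f p = g p"
  proof (induction p)
    case (pCons a p)
    then show ?case
      using assms ring_hom_pCons[OF assms(1), of a p] ring_hom_pCons[OF assms(2), of a p] by simp
  qed (simp add: ring_hom_0 assms(1,2))
qed

lemma poly_ring_hom_in_subring:
  fixes f :: "'a::comm_ring_1 poly \<Rightarrow> 'b::comm_ring_1"
  assumes "ring_hom f" "\<And>c. f [:c:] \<in> S" "f [:0, 1:] \<in> S"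
    and "\<And>x y. x \<in> S \<Longrightarrow> y \<in> S \<Longrightarrow> x + y \<in> S" "\<And>x y. x \<in> S \<Longrightarrow> y \<in> S \<Longrightarrow> x * y \<in> S"
  shows "f p \<in> S"
proof (induction p)
  case 0
  then show ?case using assms(2)[of 0] by simp
next
  case (pCons a p)
  then show ?case
    using assms ring_hom_pCons[OF assms(1), of a p] by simp
qed

lemma k_alg_hom_iff: "k_alg_hom f \<longleftrightarrow> ring_hom f \<and> (\<forall>c. f (constk c) = constk c)"
  by (auto simp: k_alg_hom_def ring_hom_def)

lemma ring_hom_constk: "ring_hom (constk :: 'a::field \<Rightarrow> 'a mpoly4)"
  by (simp add: ring_hom_def constk_def one_pCons)

lemma ring_hom_emb_x: "ring_hom (emb_x :: 'a::field poly \<Rightarrow> 'a mpoly4)"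
  and ring_hom_emb_xy: "ring_hom (emb_xy :: 'a::field poly poly \<Rightarrow> 'a mpoly4)"
  and ring_hom_emb_xyz: "ring_hom (emb_xyz :: 'a::field poly poly poly \<Rightarrow> 'a mpoly4)"
  by (simp_all add: ring_hom_def emb_x_def emb_xy_def emb_xyz_def one_pCons)

lemma emb_x_const [simp]: "emb_x [:c:] = constk c"
  and emb_xy_const [simp]: "emb_xy [:p:] = emb_x p"
  and emb_xyz_const [simp]: "emb_xyz [:q:] = emb_xy q"
  and emb_x_0 [simp]: "emb_x 0 = 0"
  and emb_xy_0 [simp]: "emb_xy 0 = 0"
  by (simp_all add: constk_def emb_x_def emb_xy_def emb_xyz_def)

definition subst1 :: "'a::field mpoly4 \<Rightarrow> 'a poly \<Rightarrow> 'a mpoly4" where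
  "subst1 a p = poly (map_poly constk p) a"

definition subst2 :: "'a::field mpoly4 \<Rightarrow> 'a mpoly4 \<Rightarrow> 'a poly poly \<Rightarrow> 'a mpoly4" where
  "subst2 a b p = poly (map_poly (subst1 a) p) b"

definition subst3 :: "'a::field mpoly4 \<Rightarrow> 'a mpoly4 \<Rightarrow> 'a mpoly4 \<Rightarrow> 'a poly poly poly \<Rightarrow> 'a mpoly4" where
  "subst3 a b c p = poly (map_poly (subst2 a b) p) c"

definition subst4 :: "'a::field mpoly4 \<Rightarrow> 'a mpoly4 \<Rightarrow> 'a mpoly4 \<Rightarrow> 'a mpoly4 \<Rightarrow> 'a mpoly4 \<Rightarrow> 'a mpoly4" where
  "subst4 a b c d p = poly (map_poly (subst3 a b c) p) d"

lemma ring_hom_subst1: "ring_hom (subst1 a)"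
  unfolding subst1_def[abs_def] by (rule ring_hom_poly_map_poly[OF ring_hom_constk])

lemma ring_hom_subst2: "ring_hom (subst2 a b)"
  unfolding subst2_def[abs_def] by (rule ring_hom_poly_map_poly[OF ring_hom_subst1])

lemma ring_hom_subst3: "ring_hom (subst3 a b c)"
  unfolding subst3_def[abs_def] by (rule ring_hom_poly_map_poly[OF ring_hom_subst2])

lemma ring_hom_subst4: "ring_hom (subst4 a b c d)"
  unfolding subst4_def[abs_def] by (rule ring_hom_poly_map_poly[OF ring_hom_subst3])

lemma subst1_const [simp]: "subst1 a [:e:] = constk e"
  and subst2_const [simp]: "subst2 a b [:p:] = subst1 a p"
  and subst3_const [simp]: "subst3 a b c [:q:] = subst2 a b q"
  and subst4_const [simp]: "subst4 a b c d [:r:] = subst3 a b c r"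
  by (simp_all only: subst1_def subst2_def subst3_def subst4_def poly_map_poly_const
      ring_hom_constk ring_hom_subst1 ring_hom_subst2 ring_hom_subst3)

lemma subst1_X [simp]: "subst1 a [:0, 1:] = a"
  and subst2_X [simp]: "subst2 a b [:0, 1:] = b"
  and subst3_X [simp]: "subst3 a b c [:0, 1:] = c"
  and subst4_X [simp]: "subst4 a b c d [:0, 1:] = d"
  by (simp_all only: subst1_def subst2_def subst3_def subst4_def poly_map_poly_X
      ring_hom_constk ring_hom_subst1 ring_hom_subst2 ring_hom_subst3)

lemma subst4_emb_xyz [simp]: "subst4 a b c d (emb_xyz r) = subst3 a b c r"
  and subst4_emb_xy [simp]: "subst4 a b c d (emb_xy q) = subst2 a b q"
  and subst4_emb_x [simp]: "subst4 a b c d (emb_x p) = subst1 a p"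
  and subst4_constk [simp]: "subst4 a b c d (constk e) = constk e"
  by (simp_all add: emb_x_def emb_xy_def emb_xyz_def constk_def)

lemma subst4_varX [simp]: "subst4 a b c d varX = a"
  and subst4_varY [simp]: "subst4 a b c d varY = b"
  and subst4_varZ [simp]: "subst4 a b c d varZ = c"
  and subst4_varW [simp]: "subst4 a b c d varW = d"
  by (simp_all add: varX_def varY_def varZ_def varW_def)

lemma k_alg_hom_subst4: "k_alg_hom (subst4 a b c d)"
  by (simp add: k_alg_hom_iff ring_hom_subst4)

lemma k_alg_hom_emb_x:
  assumes "k_alg_hom f"
  shows "f (emb_x p) = subst1 (f varX) p"
proof -
  have "f \<circ> emb_x = subst1 (f varX)"
    using assms by (intro poly_ring_hom_eqI ring_hom_comp ring_hom_emb_x ring_hom_subst1)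
      (simp_all add: k_alg_hom_iff varX_def)
  then show ?thesis
    by (metis comp_apply)
qed

lemma k_alg_hom_emb_xy:
  assumes "k_alg_hom f"
  shows "f (emb_xy q) = subst2 (f varX) (f varY) q"
proof -
  have "f \<circ> emb_xy = subst2 (f varX) (f varY)"
    using assms by (intro poly_ring_hom_eqI ring_hom_comp ring_hom_emb_xy ring_hom_subst2)
      (simp_all add: k_alg_hom_iff k_alg_hom_emb_x varY_def)
  then show ?thesis
    by (metis comp_apply)
qed

lemma k_alg_hom_emb_xyz:
  assumes "k_alg_hom f"
  shows "f (emb_xyz r) = subst3 (f varX) (f varY) (f varZ) r"
proof -
  have "f \<circ> emb_xyz = subst3 (f varX) (f varY) (f varZ)"
    using assms by (intro poly_ring_hom_eqI ring_hom_comp ring_hom_emb_xyz ring_hom_subst3)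
      (simp_all add: k_alg_hom_iff k_alg_hom_emb_xy varZ_def)
  then show ?thesis
    by (metis comp_apply)
qed

lemma k_alg_hom_eq_subst4:
  assumes "k_alg_hom f"
  shows "f = subst4 (f varX) (f varY) (f varZ) (f varW)"
  using assms k_alg_hom_emb_xyz[OF assms, unfolded emb_xyz_def]
  by (intro poly_ring_hom_eqI ring_hom_subst4) (simp_all add: k_alg_hom_iff varW_def)

lemma k_alg_hom_eqI:
  assumes "k_alg_hom f" "k_alg_hom g"
    and "f varX = g varX" "f varY = g varY" "f varZ = g varZ" "f varW = g varW"
  shows "f = g"
  using k_alg_hom_eq_subst4[OF assms(1)] k_alg_hom_eq_subst4[OF assms(2)] assms(3-) by simp

lemma k_alg_hom_id: "k_alg_hom id"
  by (simp add: k_alg_hom_def)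

lemma subst1_varX [simp]: "subst1 varX = emb_x"
  by (rule ext) (metis k_alg_hom_emb_x k_alg_hom_id id_apply)

lemma subst2_varX_varY [simp]: "subst2 varX varY = emb_xy"
  by (rule ext) (metis k_alg_hom_emb_xy k_alg_hom_id id_apply)

lemma subst3_varX_varY_varZ [simp]: "subst3 varX varY varZ = emb_xyz"
  by (rule ext) (metis k_alg_hom_emb_xyz k_alg_hom_id id_apply)

definition k_subalg :: "'a::field mpoly4 set \<Rightarrow> bool" where
  "k_subalg S \<longleftrightarrow> range constk \<subseteq> S \<and> (\<forall>x\<in>S. \<forall>y\<in>S. x + y \<in> S \<and> x * y \<in> S)"

lemma k_subalg_constk: "k_subalg S \<Longrightarrow> constk c \<in> S"
  and k_subalg_add: "k_subalg S \<Longrightarrow> x \<in> S \<Longrightarrow> y \<in> S \<Longrightarrow> x + y \<in> S"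
  and k_subalg_mult: "k_subalg S \<Longrightarrow> x \<in> S \<Longrightarrow> y \<in> S \<Longrightarrow> x * y \<in> S"
  by (auto simp: k_subalg_def)

lemma k_subalg_range:
  assumes g: "ring_hom g" and "range constk \<subseteq> range g"
  shows "k_subalg (range g)"
  unfolding k_subalg_def
proof (intro conjI ballI)
  fix x y assume "x \<in> range g" "y \<in> range g"
  then obtain u v where "x = g u" "y = g v"
    by blast
  with g show "x + y \<in> range g" "x * y \<in> range g"
    unfolding ring_hom_def by (metis rangeI)+
qed fact

lemma k_subalg_range_constk: "k_subalg (range constk)"
  by (intro k_subalg_range ring_hom_constk) simp

lemma k_subalg_range_emb_x: "k_subalg (range emb_x)"
  by (intro k_subalg_range ring_hom_emb_x) (metis emb_x_const image_subset_iff rangeI)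

lemma k_subalg_range_emb_xy: "k_subalg (range emb_xy)"
  by (intro k_subalg_range ring_hom_emb_xy) (metis emb_x_const emb_xy_const image_subset_iff rangeI)

lemma k_subalg_range_emb_xyz: "k_subalg (range emb_xyz)"
  by (intro k_subalg_range ring_hom_emb_xyz)
    (metis emb_x_const emb_xy_const emb_xyz_const image_subset_iff rangeI)

lemma subst1_in_subalg: "k_subalg S \<Longrightarrow> a \<in> S \<Longrightarrow> subst1 a p \<in> S"
  by (rule poly_ring_hom_in_subring[OF ring_hom_subst1]) (auto simp: k_subalg_def)

lemma subst2_in_subalg: "k_subalg S \<Longrightarrow> a \<in> S \<Longrightarrow> b \<in> S \<Longrightarrow> subst2 a b q \<in> S"
  by (rule poly_ring_hom_in_subring[OF ring_hom_subst2]) (auto simp: subst1_in_subalg k_subalg_def)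

lemma subst3_in_subalg:
  "k_subalg S \<Longrightarrow> a \<in> S \<Longrightarrow> b \<in> S \<Longrightarrow> c \<in> S \<Longrightarrow> subst3 a b c r \<in> S"
  by (rule poly_ring_hom_in_subring[OF ring_hom_subst3]) (auto simp: subst2_in_subalg k_subalg_def)

lemma range_emb_x_subset: "range emb_x \<subseteq> range (emb_xy :: _ \<Rightarrow> 'a::field mpoly4)"
  and range_emb_xy_subset: "range emb_xy \<subseteq> range (emb_xyz :: _ \<Rightarrow> 'a::field mpoly4)"
  by (auto intro!: image_eqI[where x = "[:_:]"])

lemma varX_in_range: "varX \<in> range emb_x"
  and varY_in_range: "varY \<in> range emb_xy"
  and varZ_in_range: "varZ \<in> range emb_xyz"
  by (simp_all add: varX_def varY_def varZ_def)

lemma constk_mult: "constk (a * b) = constk a * (constk b :: 'a::field mpoly4)"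
  and constk_1: "constk 1 = (1 :: 'a::field mpoly4)"
  and constk_0: "constk 0 = (0 :: 'a::field mpoly4)"
  by (simp_all add: constk_def one_pCons)

lemma affine_eq_varX_imp_1: "s \<in> range constk \<Longrightarrow> constk a * varX + s = varX \<Longrightarrow> a = 1"
  and affine_eq_varY_imp_1: "s \<in> range emb_x \<Longrightarrow> constk a * varY + s = varY \<Longrightarrow> a = 1"
  and affine_eq_varZ_imp_1: "s \<in> range emb_xy \<Longrightarrow> constk a * varZ + s = varZ \<Longrightarrow> a = 1"
  and affine_eq_varW_imp_1: "s \<in> range emb_xyz \<Longrightarrow> constk a * varW + s = varW \<Longrightarrow> a = 1"
  by (auto simp: constk_def varX_def varY_def varZ_def varW_def emb_x_def emb_xy_def emb_xyz_def
      one_pCons)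

lemma char2_square_eq_1: "CHAR('a::field) = 2 \<Longrightarrow> l * l = (1::'a) \<Longrightarrow> l = 1"
  using square_eq_1_iff[of l] uminus_CHAR_2[of 1] by auto

lemma involution_scale_eq_1:
  fixes \<tau> :: "'a::field mpoly4 \<Rightarrow> 'a mpoly4"
  assumes "CHAR('a) = 2" and \<tau>: "k_alg_hom \<tau>" "\<tau> (\<tau> v) = v"
    and v: "\<tau> v = constk l * v + r" and S: "k_subalg S" "r \<in> S" "\<tau> r \<in> S"
    and rigid: "\<And>a s. s \<in> S \<Longrightarrow> constk a * v + s = v \<Longrightarrow> a = 1"
  shows "l = 1"
proof -
  have "v = \<tau> (\<tau> v)"
    using \<tau>(2) by simp
  also have "\<dots> = constk (l * l) * v + (constk l * r + \<tau> r)"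
    using \<tau>(1) v by (simp add: k_alg_hom_def constk_mult algebra_simps)
  finally have "l * l = 1"
    using S by (intro rigid[of "constk l * r + \<tau> r"])
      (auto intro: k_subalg_add k_subalg_mult k_subalg_constk)
  with assms(1) show ?thesis
    by (rule char2_square_eq_1)
qed

lemma involution_translate_fixed:
  fixes \<tau> :: "'a::field mpoly4 \<Rightarrow> 'a mpoly4"
  assumes "CHAR('a) = 2" and \<tau>: "k_alg_hom \<tau>" "\<tau> (\<tau> v) = v" and v: "\<tau> v = v + r"
  shows "\<tau> r = r"
proof -
  have "v = v + r + \<tau> r"
    using \<tau> v by (simp add: k_alg_hom_def)
  then have "\<tau> r = - r"
    by (simp add: add.assoc add_eq_0_iff2) (metis minus_minus)
  with assms(1) show ?thesis
    using uminus_CHAR_2[of r] by simp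
qed

lemma involutionD:
  assumes "involution \<tau>"
  shows "k_alg_hom \<tau>" "\<tau> (\<tau> u) = u"
  using assms by (auto simp: involution_def k_alg_aut_def fun_eq_iff)

lemma triangular_involution_unipotent:
  fixes \<tau> :: "'a::field mpoly4 \<Rightarrow> 'a mpoly4"
  assumes char: "CHAR('a) = 2" and "triangular \<tau>" "involution \<tau>"
  obtains c p2 p3 p4 where "\<tau> varX = varX + constk c" "\<tau> varY = varY + emb_x p2"
    "\<tau> varZ = varZ + emb_xy p3" "\<tau> varW = varW + emb_xyz p4"
proof -
  note \<tau> = involutionD(1)[OF assms(3)] and inv = involutionD(2)[OF assms(3)]
  obtain l1 l2 l3 l4 c1 p2 p3 p4 where
    X: "\<tau> varX = constk l1 * varX + constk c1" and
    Y: "\<tau> varY = constk l2 * varY + emb_x p2" and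
    Z: "\<tau> varZ = constk l3 * varZ + emb_xy p3" and
    W: "\<tau> varW = constk l4 * varW + emb_xyz p4"
    using assms(2) unfolding triangular_def by blast
  note closure = k_subalg_add k_subalg_mult k_subalg_constk rangeI
  have X_x: "\<tau> varX \<in> range emb_x"
    unfolding X by (intro closure k_subalg_range_emb_x varX_in_range)
  then have X_xy: "\<tau> varX \<in> range emb_xy" and X_xyz: "\<tau> varX \<in> range emb_xyz"
    using range_emb_x_subset range_emb_xy_subset by blast+
  have Y_xy: "\<tau> varY \<in> range emb_xy"
    unfolding Y using range_emb_x_subset
    by (intro closure k_subalg_range_emb_xy varY_in_range) blast
  then have Y_xyz: "\<tau> varY \<in> range emb_xyz"
    using range_emb_xy_subset by blast
  have Z_xyz: "\<tau> varZ \<in> range emb_xyz"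
    unfolding Z using range_emb_xy_subset
    by (intro closure k_subalg_range_emb_xyz varZ_in_range) blast
  have "l1 = 1"
    by (rule involution_scale_eq_1[OF char \<tau> inv X k_subalg_range_constk])
      (auto simp: \<tau>[unfolded k_alg_hom_def] intro: affine_eq_varX_imp_1)
  moreover have "l2 = 1"
    by (rule involution_scale_eq_1[OF char \<tau> inv Y k_subalg_range_emb_x])
      (auto simp: k_alg_hom_emb_x[OF \<tau>]
        intro: affine_eq_varY_imp_1 subst1_in_subalg k_subalg_range_emb_x X_x)
  moreover have "l3 = 1"
    by (rule involution_scale_eq_1[OF char \<tau> inv Z k_subalg_range_emb_xy])
      (auto simp: k_alg_hom_emb_xy[OF \<tau>]
        intro: affine_eq_varZ_imp_1 subst2_in_subalg k_subalg_range_emb_xy X_xy Y_xy)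
  moreover have "l4 = 1"
    by (rule involution_scale_eq_1[OF char \<tau> inv W k_subalg_range_emb_xyz])
      (auto simp: k_alg_hom_emb_xyz[OF \<tau>]
        intro: affine_eq_varW_imp_1 subst3_in_subalg k_subalg_range_emb_xyz X_xyz Y_xyz Z_xyz)
  ultimately show thesis
    using X Y Z W by (intro that) (simp_all add: constk_1)
qed

lemma k_alg_hom_comp: "k_alg_hom f \<Longrightarrow> k_alg_hom g \<Longrightarrow> k_alg_hom (f \<circ> g)"
  by (simp add: k_alg_hom_def)

lemma k_alg_aut_comp: "k_alg_aut f \<Longrightarrow> k_alg_aut g \<Longrightarrow> k_alg_aut (f \<circ> g)"
  by (simp add: k_alg_aut_def k_alg_hom_comp bij_comp)

lemma k_alg_aut_of_inverse:
  assumes f: "k_alg_hom f" and g: "k_alg_hom g"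
    and "g (f varX) = varX" "g (f varY) = varY" "g (f varZ) = varZ" "g (f varW) = varW"
    and "f (g varX) = varX" "f (g varY) = varY" "f (g varZ) = varZ" "f (g varW) = varW"
  shows "k_alg_aut f"
proof -
  have "g \<circ> f = id" "f \<circ> g = id"
    by (rule k_alg_hom_eqI; simp add: assms k_alg_hom_comp k_alg_hom_id)+
  then show ?thesis
    using f by (auto simp: k_alg_aut_def intro: o_bij)
qed

lemma subst4_add [simp]: "subst4 a b c d (p + q) = subst4 a b c d p + subst4 a b c d q"
  using ring_hom_subst4[of a b c d] unfolding ring_hom_def by blast

lemma subst4_diff [simp]: "subst4 a b c d (p - q) = subst4 a b c d p - subst4 a b c d q"
  using subst4_add[of a b c d "p - q" q] by (simp add: eq_diff_eq)

lemma k_alg_aut_shear_y: "k_alg_aut (subst4 varX (varY + emb_x p) varZ varW)"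
  by (rule k_alg_aut_of_inverse[OF k_alg_hom_subst4 k_alg_hom_subst4[of varX "varY - emb_x p" varZ varW]])
    simp_all

lemma k_alg_aut_shear_z: "k_alg_aut (subst4 varX varY (varZ + emb_xy q) varW)"
  by (rule k_alg_aut_of_inverse[OF k_alg_hom_subst4 k_alg_hom_subst4[of varX varY "varZ - emb_xy q" varW]])
    simp_all

lemma k_alg_aut_shear_w: "k_alg_aut (subst4 varX varY varZ (varW + emb_xyz r))"
  by (rule k_alg_aut_of_inverse[OF k_alg_hom_subst4 k_alg_hom_subst4[of varX varY varZ "varW - emb_xyz r"]])
    simp_all

lemma k_alg_aut_cycle: "k_alg_aut (subst4 varY varZ varW varX)"
  by (rule k_alg_aut_of_inverse[OF k_alg_hom_subst4 k_alg_hom_subst4[of varW varX varY varZ]]) simp_all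

lemma k_alg_aut_cycle_shear:
  "k_alg_aut (subst4 (varY + emb_x p) (varZ + emb_xy q) (varW + emb_xyz r) varX)"
proof -
  have "subst4 (varY + emb_x p) (varZ + emb_xy q) (varW + emb_xyz r) varX =
    subst4 varX varY varZ (varW + emb_xyz r) \<circ> subst4 varX varY (varZ + emb_xy q) varW \<circ>
      subst4 varX (varY + emb_x p) varZ varW \<circ> subst4 varY varZ varW varX"
    by (rule k_alg_hom_eqI) (simp_all add: k_alg_hom_comp k_alg_hom_subst4)
  then show ?thesis
    by (simp add: k_alg_aut_comp k_alg_aut_shear_y k_alg_aut_shear_z k_alg_aut_shear_w k_alg_aut_cycle)
qed

lemma char2_invariant_of_translate:
  fixes \<tau> :: "'a::field mpoly4 \<Rightarrow> 'a mpoly4"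
  assumes "CHAR('a) = 2" and "k_alg_hom \<tau>" and "\<tau> t = t + 1" and "\<tau> v = v + r" and "\<tau> r = r"
  shows "\<tau> (v + r * t) = v + r * t"
proof -
  have "\<tau> (v + r * t) = v + r * t + (r + r)"
    using assms(2-) by (simp add: k_alg_hom_def algebra_simps)
  also have "r + r = 0"
    using uminus_CHAR_2[of r] assms(1) by (simp add: add_eq_0_iff2)
  finally show ?thesis
    by simp
qed

lemma swap_yz_involutive: "subst4 varX varZ varY varW \<circ> subst4 varX varZ varY varW = id"
  by (rule k_alg_hom_eqI) (simp_all add: k_alg_hom_comp k_alg_hom_subst4 k_alg_hom_id)

lemma k_alg_aut_swap_yz: "k_alg_aut (subst4 varX varZ varY varW)"
  by (rule k_alg_aut_of_inverse[OF k_alg_hom_subst4 k_alg_hom_subst4[of varX varZ varY varW]]) simp_all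

lemma conj_apply_eqI: "bij \<phi> \<Longrightarrow> \<tau> (\<phi> u) = \<phi> v \<Longrightarrow> (inv \<phi> \<circ> \<tau> \<circ> \<phi>) u = v"
  by (simp add: bij_is_inj)

definition reduced_triangular :: "('a::field mpoly4 \<Rightarrow> 'a mpoly4) \<Rightarrow> bool" where
  "reduced_triangular \<sigma> \<longleftrightarrow> (\<exists>p2 p3 p4.
     \<sigma> varX = varX \<and> \<sigma> varY = varY + emb_x p2 \<and> \<sigma> varZ = varZ + emb_xy p3 \<and>
     \<sigma> varW = varW + emb_xyz p4 \<and>
     ((p2 = 0 \<and> p3 = 0) \<or> (p2 = 0 \<and> p3 \<noteq> 0) \<or> (p2 \<noteq> 0 \<and> p3 \<noteq> 0)))"

lemma conj_reduced_of_fixed_x: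
  fixes \<tau> :: "'a::field mpoly4 \<Rightarrow> 'a mpoly4"
  assumes \<tau>: "k_alg_hom \<tau>" and X: "\<tau> varX = varX" and Y: "\<tau> varY = varY + emb_x p2"
    and Z: "\<tau> varZ = varZ + emb_xy p3" and W: "\<tau> varW = varW + emb_xyz p4"
  shows "\<exists>\<phi>. k_alg_aut \<phi> \<and> reduced_triangular (inv \<phi> \<circ> \<tau> \<circ> \<phi>)"
proof (cases "p2 \<noteq> 0 \<and> p3 = 0")
  case False
  then have "reduced_triangular \<tau>"
    using X Y Z W by (auto simp: reduced_triangular_def)
  then show ?thesis
    by (intro exI[of _ id]) (simp add: k_alg_aut_def k_alg_hom_id inv_id)
next
  case True
  define \<sigma> :: "'a mpoly4 \<Rightarrow> 'a mpoly4" where "\<sigma> = subst4 varX varZ varY varW"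
  have aut: "k_alg_aut \<sigma>" and \<sigma>\<sigma>: "\<And>u. \<sigma> (\<sigma> u) = u"
    unfolding \<sigma>_def using k_alg_aut_swap_yz swap_yz_involutive by (auto simp: fun_eq_iff)
  have "\<sigma> (emb_xyz p4) \<in> range emb_xyz"
    unfolding \<sigma>_def using range_emb_x_subset range_emb_xy_subset varX_in_range varY_in_range
    by (auto intro!: subst3_in_subalg k_subalg_range_emb_xyz varZ_in_range)
  then obtain q4 where q4: "emb_xyz q4 = \<sigma> (emb_xyz p4)"
    by auto
  have bij: "bij \<sigma>"
    using aut by (simp add: k_alg_aut_def)
  have "(inv \<sigma> \<circ> \<tau> \<circ> \<sigma>) varX = varX"
    by (rule conj_apply_eqI[OF bij]) (simp add: \<sigma>_def X)
  moreover have "(inv \<sigma> \<circ> \<tau> \<circ> \<sigma>) varY = varY"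
    by (rule conj_apply_eqI[OF bij]) (simp add: \<sigma>_def Z True)
  moreover have "(inv \<sigma> \<circ> \<tau> \<circ> \<sigma>) varZ = varZ + emb_xy [:p2:]"
    by (rule conj_apply_eqI[OF bij]) (simp add: \<sigma>_def Y)
  moreover have "(inv \<sigma> \<circ> \<tau> \<circ> \<sigma>) varW = varW + emb_xyz q4"
  proof (rule conj_apply_eqI[OF bij])
    have "\<sigma> varW = varW" "\<sigma> (varW + emb_xyz q4) = \<sigma> varW + \<sigma> (emb_xyz q4)"
      by (simp_all add: \<sigma>_def)
    then show "\<tau> (\<sigma> varW) = \<sigma> (varW + emb_xyz q4)"
      by (simp add: W q4 \<sigma>\<sigma>)
  qed
  moreover have "[:p2:] \<noteq> 0"
    using True by simp
  ultimately have "reduced_triangular (inv \<sigma> \<circ> \<tau> \<circ> \<sigma>)"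
    unfolding reduced_triangular_def by (metis add_0_right emb_x_0)
  then show ?thesis
    using aut by blast
qed

lemma conj_reduced_of_translate_x:
  fixes \<tau> :: "'a::field mpoly4 \<Rightarrow> 'a mpoly4"
  assumes char: "CHAR('a) = 2" and \<tau>: "k_alg_hom \<tau>" and "c \<noteq> 0"
    and X: "\<tau> varX = varX + constk c" and Y: "\<tau> varY = varY + emb_x p2"
    and Z: "\<tau> varZ = varZ + emb_xy p3" and W: "\<tau> varW = varW + emb_xyz p4"
    and fixed: "\<tau> (emb_x p2) = emb_x p2" "\<tau> (emb_xy p3) = emb_xy p3" "\<tau> (emb_xyz p4) = emb_xyz p4"
  shows "\<exists>\<phi>. k_alg_aut \<phi> \<and> reduced_triangular (inv \<phi> \<circ> \<tau> \<circ> \<phi>)"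
proof -
  define t :: "'a mpoly4" where "t = constk (inverse c) * varX"
  have \<tau>_t: "\<tau> t = t + 1"
    using \<tau> X \<open>c \<noteq> 0\<close> by (simp add: t_def k_alg_hom_def distrib_left flip: constk_mult constk_1)
  note invariant = char2_invariant_of_translate[OF char \<tau> \<tau>_t]
  note closure = k_subalg_add k_subalg_mult k_subalg_constk rangeI
  have "t \<in> range emb_x"
    unfolding t_def by (intro closure k_subalg_range_emb_x varX_in_range)
  then have t: "t \<in> range emb_x" "t \<in> range emb_xy" "t \<in> range emb_xyz"
    using range_emb_x_subset range_emb_xy_subset by blast+
  have "emb_x p2 * t \<in> range emb_x"
    by (intro closure k_subalg_range_emb_x t)
  then obtain q2 where q2: "emb_x q2 = emb_x p2 * t"
    by (metis rangeE)
  have "emb_xy p3 * t \<in> range emb_xy"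
    by (intro closure k_subalg_range_emb_xy t)
  then obtain q3 where q3: "emb_xy q3 = emb_xy p3 * t"
    by (metis rangeE)
  have "emb_xyz p4 * t \<in> range emb_xyz"
    by (intro closure k_subalg_range_emb_xyz t)
  then obtain q4 where q4: "emb_xyz q4 = emb_xyz p4 * t"
    by (metis rangeE)
  define \<phi> :: "'a mpoly4 \<Rightarrow> 'a mpoly4" where
    "\<phi> = subst4 (varY + emb_x q2) (varZ + emb_xy q3) (varW + emb_xyz q4) varX"
  have aut: "k_alg_aut \<phi>"
    unfolding \<phi>_def by (rule k_alg_aut_cycle_shear)
  then have bij: "bij \<phi>"
    by (simp add: k_alg_aut_def)
  have \<phi>_vars: "\<phi> varX = varY + emb_x q2" "\<phi> varY = varZ + emb_xy q3"
    "\<phi> varZ = varW + emb_xyz q4" "\<phi> varW = varX" "\<phi> (varW + constk c) = varX + constk c"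
    by (simp_all add: \<phi>_def)
  have "(inv \<phi> \<circ> \<tau> \<circ> \<phi>) varX = varX"
    by (rule conj_apply_eqI[OF bij]) (simp add: \<phi>_vars q2 invariant Y fixed)
  moreover have "(inv \<phi> \<circ> \<tau> \<circ> \<phi>) varY = varY"
    by (rule conj_apply_eqI[OF bij]) (simp add: \<phi>_vars q3 invariant Z fixed)
  moreover have "(inv \<phi> \<circ> \<tau> \<circ> \<phi>) varZ = varZ"
    by (rule conj_apply_eqI[OF bij]) (simp add: \<phi>_vars q4 invariant W fixed)
  moreover have "(inv \<phi> \<circ> \<tau> \<circ> \<phi>) varW = varW + emb_xyz [:[:[:c:]:]:]"
    by (rule conj_apply_eqI[OF bij]) (simp add: \<phi>_vars X)
  ultimately have "reduced_triangular (inv \<phi> \<circ> \<tau> \<circ> \<phi>)"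
    unfolding reduced_triangular_def by (metis add_0_right emb_x_0 emb_xy_0)
  with aut show ?thesis
    by blast
qed

theorem lemma2:
  fixes \<tau> :: "'a::field mpoly4 \<Rightarrow> 'a mpoly4"
  assumes "CHAR('a) = 2"
    and "triangular \<tau>"
    and "involution \<tau>"
  shows "\<exists>\<phi>. k_alg_aut \<phi> \<and>
           (\<exists>p2 p3 p4.
              (inv \<phi> \<circ> \<tau> \<circ> \<phi>) varX = varX \<and>
              (inv \<phi> \<circ> \<tau> \<circ> \<phi>) varY = varY + emb_x p2 \<and>
              (inv \<phi> \<circ> \<tau> \<circ> \<phi>) varZ = varZ + emb_xy p3 \<and>
              (inv \<phi> \<circ> \<tau> \<circ> \<phi>) varW = varW + emb_xyz p4 \<and>
              ((p2 = 0 \<and> p3 = 0) \<or> (p2 = 0 \<and> p3 \<noteq> 0) \<or> (p2 \<noteq> 0 \<and> p3 \<noteq> 0)))"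
proof -
  obtain c p2 p3 p4 where X: "\<tau> varX = varX + constk c" and Y: "\<tau> varY = varY + emb_x p2"
    and Z: "\<tau> varZ = varZ + emb_xy p3" and W: "\<tau> varW = varW + emb_xyz p4"
    using triangular_involution_unipotent[OF assms] .
  note \<tau> = involutionD(1)[OF assms(3)] and inv = involutionD(2)[OF assms(3)]
  have "\<exists>\<phi>. k_alg_aut \<phi> \<and> reduced_triangular (inv \<phi> \<circ> \<tau> \<circ> \<phi>)"
  proof (cases "c = 0")
    case True
    with X have "\<tau> varX = varX"
      by (simp add: constk_0)
    then show ?thesis
      by (rule conj_reduced_of_fixed_x[OF \<tau> _ Y Z W])
  next
    case False
    show ?thesis
      using involution_translate_fixed[OF assms(1) \<tau> inv] X Y Z W False
      by (intro conj_reduced_of_translate_x[OF assms(1) \<tau>]) simp_all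
  qed
  then show ?thesis
    unfolding reduced_triangular_def .
qed

end
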